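(* Let $(X,Y,\phi)$ be an $L$-context and $X'\subseteq X$. The following are equivalent: (i) $X\setminus X'$ is $\phi$-reducible in RST, i.e. for every $\mu\in L^X$ there is $\mu'\in L^{X'}$ with $\phi^\exists\mu=(\phi_{X',Y})^\exists\mu'$; (ii) $\phi^\exists\mu=(\phi_{X',Y})^\exists\big((\phi^\forall\phi^\exists\mu)_{X'}\big)$ for all $\mu\in L^X$; (iii) $\phi^\exists\phi^\forall=(\phi_{X',Y})^\exists(\phi_{X',Y})^\forall$ as maps $L^Y\to L^Y$; (iv) the map $\mathcal{K}\phi_{X',Y}\to\mathcal{K}\phi$, $\mu'\mapsto\phi^\forall\phi^\exists\underline{\mu'}$, is surjective (and hence an isomorphism of complete $L$-lattices).
   Context: $L=(L,* )$ is a complete residuated lattice: a complete lattice with bottom $0$ and top $1$, equipped with a commutative associative operation $*$ with unit $1$ satisfying $a*\bigvee_i b_i=\bigvee_i a*b_i$; $\to$ is its residuum ($a*b\le c\iff a\le b\to c$). An $L$-context is a triple $(X,Y,\phi)$ with $X,Y$ sets and $\phi\colon X\times Y\to L$. $L^X$ is the set of maps $X\to L$ with $L$-order $L^X(\mu,\mu')=\bigwedge_{x}(\mu(x)\to\mu'(x))$. $(\phi^\exists\mu)(y)=\bigvee_{x\in X}\mu(x)*\phi(x,y)$, $(\phi^\forall\lambda)(x)=\bigwedge_{y\in Y}(\phi(x,y)\to\lambda(y))$. $\mathcal{K}\phi=\{\mu\in L^X\mid\phi^\forall\phi^\exists\mu=\mu\}$ with the inherited $L$-order. $\phi_{X',Y}$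 is the restriction of $\phi$ to $X'\times Y$; $\mu_{X'}$ the restriction of $\mu\in L^X$ to $X'$; $\underline{\mu'}\in L^X$ the extension of $\mu'\in L^{X'}$ by $0$ outside $X'$. An isomorphism of complete $L$-lattices is an $L$-isometric bijection. *)

theory Defs
  imports Main
begin

text \<open>Complete residuated lattice on a complete lattice type 'l:
  bottom = bot (0), top = top (1), multiplication m (the operation *),
  residuum r (written a \<rightarrow> b as r a b).\<close>
definition complete_residuated_lattice ::
  "('l::complete_lattice \<Rightarrow> 'l \<Rightarrow> 'l) \<Rightarrow> ('l \<Rightarrow> 'l \<Rightarrow> 'l) \<Rightarrow> bool" where
  "complete_residuated_lattice m r \<longleftrightarrow>
     (\<forall>a b. m a b = m b a) \<and>
     (\<forall>a b c. m (m a b) c = m a (m b c)) \<and>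
     (\<forall>a. m a top = a) \<and>
     (\<forall>a B. m a (Sup B) = Sup (m a ` B)) \<and>
     (\<forall>a b c. m a b \<le> c \<longleftrightarrow> a \<le> r b c)"

text \<open>L^A for a set A: maps represented as functions vanishing (= bot) outside A.\<close>
definition Lfun :: "'a set \<Rightarrow> ('a \<Rightarrow> 'l::complete_lattice) set" where
  "Lfun A = {\<mu>. \<forall>x. x \<notin> A \<longrightarrow> \<mu> x = bot}"

definition ext_op ::
  "('l::complete_lattice \<Rightarrow> 'l \<Rightarrow> 'l) \<Rightarrow> ('x \<Rightarrow> 'y \<Rightarrow> 'l) \<Rightarrow> 'x set \<Rightarrow> 'y set
     \<Rightarrow> ('x \<Rightarrow> 'l) \<Rightarrow> ('y \<Rightarrow> 'l)" where
  "ext_op m \<phi> A B \<mu> = (\<lambda>y. if y \<in> B then (SUP x\<in>A. m (\<mu> x) (\<phi> x y)) else bot)"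

definition univ_op ::
  "('l::complete_lattice \<Rightarrow> 'l \<Rightarrow> 'l) \<Rightarrow> ('x \<Rightarrow> 'y \<Rightarrow> 'l) \<Rightarrow> 'x set \<Rightarrow> 'y set
     \<Rightarrow> ('y \<Rightarrow> 'l) \<Rightarrow> ('x \<Rightarrow> 'l)" where
  "univ_op r \<phi> A B \<psi> = (\<lambda>x. if x \<in> A then (INF y\<in>B. r (\<phi> x y) (\<psi> y)) else bot)"

text \<open>Restriction of mu to A (represented by extension with bot outside A).\<close>
definition restr :: "'a set \<Rightarrow> ('a \<Rightarrow> 'l::complete_lattice) \<Rightarrow> ('a \<Rightarrow> 'l)" where
  "restr A \<mu> = (\<lambda>x. if x \<in> A then \<mu> x else bot)"

definition Kset ::
  "('l::complete_lattice \<Rightarrow> 'l \<Rightarrow> 'l) \<Rightarrow> ('l \<Rightarrow> 'l \<Rightarrow> 'l) \<Rightarrow> ('x \<Rightarrow> 'y \<Rightarrow> 'l)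
     \<Rightarrow> 'x set \<Rightarrow> 'y set \<Rightarrow> ('x \<Rightarrow> 'l) set" where
  "Kset m r \<phi> A B = {\<mu> \<in> Lfun A. univ_op r \<phi> A B (ext_op m \<phi> A B \<mu>) = \<mu>}"

end

theory Submission
  imports Defs
begin

text \<open>Everything follows from the Galois connection between \<open>\<phi>\<^sup>\<exists>\<close> and \<open>\<phi>\<^sup>\<forall>\<close>
  together with two facts about passing to \<open>X' \<subseteq> X\<close>: \<open>(\<phi>\<^sub>X\<^sub>'\<^sub>,\<^sub>Y)\<^sup>\<exists>\<close> is \<open>\<phi>\<^sup>\<exists>\<close>
  applied to the restriction to \<open>X'\<close>, and \<open>(\<phi>\<^sub>X\<^sub>'\<^sub>,\<^sub>Y)\<^sup>\<forall>\<close> is the restriction of \<open>\<phi>\<^sup>\<forall>\<close>.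
  Since \<open>\<phi>\<^sup>\<exists>\<phi>\<^sup>\<forall>\<phi>\<^sup>\<exists> = \<phi>\<^sup>\<exists>\<close> and \<open>\<phi>\<^sup>\<forall>\<phi>\<^sup>\<exists>\<phi>\<^sup>\<forall> = \<phi>\<^sup>\<forall>\<close>, conditions (ii) and (iii) are the
  same equation read on the images of \<open>\<phi>\<^sup>\<exists>\<close> and of \<open>\<phi>\<^sup>\<forall>\<close>.  For (i) the candidate
  \<open>\<mu>'\<close> can always be replaced by the largest one, \<open>(\<phi>\<^sup>\<forall>\<phi>\<^sup>\<exists>\<mu>)\<^sub>X\<^sub>'\<close>; for (iv), whose
  fixpoints \<open>\<phi>\<^sup>\<forall>\<psi>\<close> are exactly the images of \<open>\<phi>\<^sup>\<forall>\<close>, the preimage can be taken to be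
  \<open>(\<phi>\<^sub>X\<^sub>'\<^sub>,\<^sub>Y)\<^sup>\<forall>\<psi>\<close>.\<close>

lemma restr_Lfun: "\<mu> \<in> Lfun X \<Longrightarrow> restr X \<mu> = \<mu>"
  unfolding restr_def Lfun_def by auto

lemma restr_in_Lfun: "restr X \<mu> \<in> Lfun X"
  unfolding restr_def Lfun_def by auto

lemma restr_le: "restr X \<mu> \<le> (\<mu> :: 'a \<Rightarrow> 'l::complete_lattice)"
  unfolding restr_def le_fun_def by auto

lemma restr_mono: "\<mu> \<le> \<nu> \<Longrightarrow> restr X \<mu> \<le> restr X (\<nu> :: 'a \<Rightarrow> 'l::complete_lattice)"
  unfolding restr_def le_fun_def by auto

lemma univ_op_in_Lfun: "univ_op r \<phi> X Y \<psi> \<in> Lfun X"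
  unfolding univ_op_def Lfun_def by auto

lemma restr_univ_op:
  assumes "X' \<subseteq> X"
  shows "restr X' (univ_op r \<phi> X Y \<psi>) = univ_op r \<phi> X' Y \<psi>"
  using assms unfolding univ_op_def restr_def by (auto simp: fun_eq_iff)

lemma ext_op_in_Lfun: "ext_op m \<phi> X Y \<mu> \<in> Lfun Y"
  unfolding ext_op_def Lfun_def by auto

lemma ext_op_restr_self: "ext_op m \<phi> X Y (restr X \<mu>) = ext_op m \<phi> X Y \<mu>"
  unfolding ext_op_def restr_def by (auto intro!: SUP_cong)

locale L_context =
  fixes m r :: "'l::complete_lattice \<Rightarrow> 'l \<Rightarrow> 'l"
    and \<phi> :: "'x \<Rightarrow> 'y \<Rightarrow> 'l"
    and Y :: "'y set"
  assumes residuated: "complete_residuated_lattice m r"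
begin

abbreviation exists_op :: "'x set \<Rightarrow> ('x \<Rightarrow> 'l) \<Rightarrow> 'y \<Rightarrow> 'l" where
  "exists_op X \<equiv> ext_op m \<phi> X Y"

abbreviation forall_op :: "'x set \<Rightarrow> ('y \<Rightarrow> 'l) \<Rightarrow> 'x \<Rightarrow> 'l" where
  "forall_op X \<equiv> univ_op r \<phi> X Y"

lemma mult_bot_left: "m bot a = bot"
proof -
  have "m a (Sup {}) = Sup (m a ` {})"
    using residuated unfolding complete_residuated_lattice_def by blast
  then show ?thesis
    using residuated unfolding complete_residuated_lattice_def by simp
qed

lemma exists_op_le_iff: "exists_op X \<mu> \<le> \<psi> \<longleftrightarrow> restr X \<mu> \<le> forall_op X \<psi>"
proof -
  have adjoint: "m a b \<le> c \<longleftrightarrow> a \<le> r b c" for a b c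
    using residuated unfolding complete_residuated_lattice_def by blast
  have "exists_op X \<mu> \<le> \<psi> \<longleftrightarrow> (\<forall>x\<in>X. \<forall>y\<in>Y. m (\<mu> x) (\<phi> x y) \<le> \<psi> y)"
    unfolding ext_op_def le_fun_def by (auto simp: SUP_le_iff)
  also have "\<dots> \<longleftrightarrow> (\<forall>x\<in>X. \<forall>y\<in>Y. \<mu> x \<le> r (\<phi> x y) (\<psi> y))"
    by (simp add: adjoint)
  also have "\<dots> \<longleftrightarrow> restr X \<mu> \<le> forall_op X \<psi>"
    unfolding restr_def univ_op_def le_fun_def by (auto simp: le_INF_iff)
  finally show ?thesis .
qed

lemma restr_le_forall_exists: "restr X \<mu> \<le> forall_op X (exists_op X \<mu>)"
  by (simp add: exists_op_le_iff [symmetric])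

lemma exists_forall_le: "exists_op X (forall_op X \<psi>) \<le> \<psi>"
  by (simp add: exists_op_le_iff restr_Lfun univ_op_in_Lfun)

lemma exists_op_mono: "\<mu> \<le> \<nu> \<Longrightarrow> exists_op X \<mu> \<le> exists_op X \<nu>"
  unfolding exists_op_le_iff using restr_le_forall_exists restr_mono order_trans by blast

lemma exists_forall_exists: "exists_op X (forall_op X (exists_op X \<mu>)) = exists_op X \<mu>"
proof (rule antisym)
  show "exists_op X (forall_op X (exists_op X \<mu>)) \<le> exists_op X \<mu>"
    by (rule exists_forall_le)
  have "exists_op X \<mu> = exists_op X (restr X \<mu>)"
    by (simp add: ext_op_restr_self)
  also have "\<dots> \<le> exists_op X (forall_op X (exists_op X \<mu>))"
    by (intro exists_op_mono restr_le_forall_exists)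
  finally show "exists_op X \<mu> \<le> exists_op X (forall_op X (exists_op X \<mu>))" .
qed

lemma forall_exists_forall: "forall_op X (exists_op X (forall_op X \<psi>)) = forall_op X \<psi>"
proof (rule antisym)
  have "exists_op X (forall_op X (exists_op X (forall_op X \<psi>))) \<le> \<psi>"
    using exists_forall_le order_trans by blast
  then show "forall_op X (exists_op X (forall_op X \<psi>)) \<le> forall_op X \<psi>"
    by (simp add: exists_op_le_iff restr_Lfun univ_op_in_Lfun)
  show "forall_op X \<psi> \<le> forall_op X (exists_op X (forall_op X \<psi>))"
    using restr_le_forall_exists by (metis restr_Lfun univ_op_in_Lfun)
qed

lemma Kset_eq_image: "Kset m r \<phi> X Y = forall_op X ` Lfun Y"
proof
  show "Kset m r \<phi> X Y \<subseteq> forall_op X ` Lfun Y"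
  proof
    fix \<mu> assume "\<mu> \<in> Kset m r \<phi> X Y"
    then have "\<mu> = forall_op X (exists_op X \<mu>)"
      unfolding Kset_def by simp
    then show "\<mu> \<in> forall_op X ` Lfun Y"
      using ext_op_in_Lfun by blast
  qed
  show "forall_op X ` Lfun Y \<subseteq> Kset m r \<phi> X Y"
    unfolding Kset_def by (auto simp: forall_exists_forall univ_op_in_Lfun)
qed

lemma exists_op_restr:
  assumes "X' \<subseteq> X"
  shows "exists_op X (restr X' \<mu>) = exists_op X' \<mu>"
proof -
  have SUP_eq: "(SUP x\<in>X. m (restr X' \<mu> x) (\<phi> x y)) = (SUP x\<in>X'. m (\<mu> x) (\<phi> x y))" for y
  proof -
    have "(\<lambda>x. m (restr X' \<mu> x) (\<phi> x y)) ` X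
        = (\<lambda>x. m (\<mu> x) (\<phi> x y)) ` X' \<union> (\<lambda>_. bot) ` (X - X')"
      using assms by (auto simp: restr_def mult_bot_left)
    then show ?thesis
      by (simp add: Sup_union_distrib)
  qed
  show ?thesis
    unfolding ext_op_def SUP_eq ..
qed

lemma exists_op_Lfun_subset:
  assumes "X' \<subseteq> X" "\<mu> \<in> Lfun X'"
  shows "exists_op X' \<mu> = exists_op X \<mu>"
  by (metis exists_op_restr [OF assms(1)] restr_Lfun [OF assms(2)])

lemma exists_forall_subset_le:
  assumes "X' \<subseteq> X"
  shows "exists_op X' (forall_op X' \<psi>) \<le> exists_op X (forall_op X \<psi>)"
proof -
  have "exists_op X' (forall_op X' \<psi>) = exists_op X (restr X' (forall_op X \<psi>))"
    using assms by (simp add: exists_op_Lfun_subset univ_op_in_Lfun restr_univ_op)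
  also have "\<dots> \<le> exists_op X (forall_op X \<psi>)"
    by (intro exists_op_mono restr_le)
  finally show ?thesis .
qed

lemma exists_reducible_iff:
  assumes "X' \<subseteq> X"
  shows "(\<exists>\<mu>'\<in>Lfun X'. exists_op X \<mu> = exists_op X' \<mu>')
    \<longleftrightarrow> exists_op X \<mu> = exists_op X' (restr X' (forall_op X (exists_op X \<mu>)))"
    (is "_ \<longleftrightarrow> _ = exists_op X' ?\<nu>")
proof
  show "exists_op X \<mu> = exists_op X' ?\<nu> \<Longrightarrow> \<exists>\<mu>'\<in>Lfun X'. exists_op X \<mu> = exists_op X' \<mu>'"
    using restr_in_Lfun by blast
next
  assume "\<exists>\<mu>'\<in>Lfun X'. exists_op X \<mu> = exists_op X' \<mu>'"
  then obtain \<mu>' where \<mu>': "\<mu>' \<in> Lfun X'" "exists_op X \<mu> = exists_op X' \<mu>'"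
    by blast
  have "\<mu>' \<le> forall_op X' (exists_op X' \<mu>')"
    using restr_le_forall_exists restr_Lfun [OF \<mu>'(1)] by metis
  then have "\<mu>' \<le> ?\<nu>"
    using \<mu>'(2) assms by (simp add: restr_univ_op)
  then have "exists_op X \<mu> \<le> exists_op X' ?\<nu>"
    using \<mu>'(2) by (simp add: exists_op_mono)
  moreover have "exists_op X' ?\<nu> \<le> exists_op X \<mu>"
    using exists_forall_subset_le [OF assms, of "exists_op X \<mu>"]
    by (simp add: assms restr_univ_op exists_forall_exists)
  ultimately show "exists_op X \<mu> = exists_op X' ?\<nu>"
    by (rule antisym)
qed

lemma exists_eq_iff_exists_forall_eq:
  assumes "X' \<subseteq> X"
  shows "(\<forall>\<mu>\<in>Lfun X. exists_op X \<mu> = exists_op X' (restr X' (forall_op X (exists_op X \<mu>))))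
    \<longleftrightarrow> (\<forall>\<psi>\<in>Lfun Y. exists_op X (forall_op X \<psi>) = exists_op X' (forall_op X' \<psi>))"
  unfolding restr_univ_op [OF assms]
proof
  assume eq: "\<forall>\<mu>\<in>Lfun X. exists_op X \<mu> = exists_op X' (forall_op X' (exists_op X \<mu>))"
  show "\<forall>\<psi>\<in>Lfun Y. exists_op X (forall_op X \<psi>) = exists_op X' (forall_op X' \<psi>)"
  proof
    fix \<psi> :: "'y \<Rightarrow> 'l"
    have "forall_op X' (exists_op X (forall_op X \<psi>)) = forall_op X' \<psi>"
      unfolding restr_univ_op [OF assms, symmetric] forall_exists_forall ..
    then show "exists_op X (forall_op X \<psi>) = exists_op X' (forall_op X' \<psi>)"
      using eq univ_op_in_Lfun by metis
  qed
next
  assume "\<forall>\<psi>\<in>Lfun Y. exists_op X (forall_op X \<psi>) = exists_op X' (forall_op X' \<psi>)"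
  then show "\<forall>\<mu>\<in>Lfun X. exists_op X \<mu> = exists_op X' (forall_op X' (exists_op X \<mu>))"
    using ext_op_in_Lfun exists_forall_exists by metis
qed

text \<open>Condition (iii) at a single \<open>\<psi>\<close> is equivalent to condition (iv) at the closed
  element \<open>\<phi>\<^sup>\<forall>\<psi>\<close>.\<close>

lemma exists_forall_subset_eq_iff:
  assumes "X' \<subseteq> X"
  shows "exists_op X (forall_op X \<psi>) = exists_op X' (forall_op X' \<psi>)
    \<longleftrightarrow> (\<exists>\<mu>'\<in>Kset m r \<phi> X' Y. forall_op X \<psi> = forall_op X (exists_op X \<mu>'))"
proof
  assume eq: "exists_op X (forall_op X \<psi>) = exists_op X' (forall_op X' \<psi>)"
  have "forall_op X' \<psi> \<in> Kset m r \<phi> X' Y"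
    unfolding Kset_def by (simp add: univ_op_in_Lfun forall_exists_forall)
  moreover have "forall_op X \<psi> = forall_op X (exists_op X (forall_op X' \<psi>))"
    using exists_op_Lfun_subset [OF assms univ_op_in_Lfun, of r \<phi> Y \<psi>] eq
    by (metis forall_exists_forall)
  ultimately show "\<exists>\<mu>'\<in>Kset m r \<phi> X' Y. forall_op X \<psi> = forall_op X (exists_op X \<mu>')"
    by blast
next
  assume "\<exists>\<mu>'\<in>Kset m r \<phi> X' Y. forall_op X \<psi> = forall_op X (exists_op X \<mu>')"
  then obtain \<mu>' where \<mu>': "\<mu>' \<in> Lfun X'" "forall_op X \<psi> = forall_op X (exists_op X \<mu>')"
    unfolding Kset_def by blast
  have closure: "exists_op X (forall_op X \<psi>) = exists_op X' \<mu>'"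
    using assms \<mu>' by (simp add: exists_forall_exists exists_op_Lfun_subset)
  then have "exists_op X' \<mu>' \<le> \<psi>"
    using exists_forall_le by metis
  then have "\<mu>' \<le> forall_op X' \<psi>"
    by (simp add: exists_op_le_iff restr_Lfun \<mu>'(1))
  then have "exists_op X (forall_op X \<psi>) \<le> exists_op X' (forall_op X' \<psi>)"
    unfolding closure by (rule exists_op_mono)
  then show "exists_op X (forall_op X \<psi>) = exists_op X' (forall_op X' \<psi>)"
    using exists_forall_subset_le [OF assms] by (rule antisym)
qed

end

theorem mainTheorem4:
  fixes m r :: "'l::complete_lattice \<Rightarrow> 'l \<Rightarrow> 'l"
    and \<phi> :: "'x \<Rightarrow> 'y \<Rightarrow> 'l"
    and X X' :: "'x set" and Y :: "'y set"
  assumes "complete_residuated_lattice m r"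
    and "X' \<subseteq> X"
  defines "i \<equiv> (\<forall>\<mu>\<in>Lfun X. \<exists>\<mu>'\<in>Lfun X'. ext_op m \<phi> X Y \<mu> = ext_op m \<phi> X' Y \<mu>')"
    and "ii \<equiv> (\<forall>\<mu>\<in>Lfun X. ext_op m \<phi> X Y \<mu> =
                 ext_op m \<phi> X' Y (restr X' (univ_op r \<phi> X Y (ext_op m \<phi> X Y \<mu>))))"
    and "iii \<equiv> (\<forall>\<psi>\<in>Lfun Y. ext_op m \<phi> X Y (univ_op r \<phi> X Y \<psi>) =
                 ext_op m \<phi> X' Y (univ_op r \<phi> X' Y \<psi>))"
    and "iv \<equiv> (Kset m r \<phi> X Y \<subseteq>
                (\<lambda>\<mu>'. univ_op r \<phi> X Y (ext_op m \<phi> X Y \<mu>')) ` Kset m r \<phi> X' Y)"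
  shows "(i \<longleftrightarrow> ii) \<and> (ii \<longleftrightarrow> iii) \<and> (iii \<longleftrightarrow> iv)"
proof -
  interpret L_context m r \<phi> Y
    by (rule L_context.intro) (fact assms(1))
  have "i \<longleftrightarrow> ii"
    unfolding i_def ii_def by (simp add: exists_reducible_iff [OF assms(2)])
  moreover have "ii \<longleftrightarrow> iii"
    unfolding ii_def iii_def by (rule exists_eq_iff_exists_forall_eq [OF assms(2)])
  moreover have "iii \<longleftrightarrow> iv"
    unfolding iii_def iv_def Kset_eq_image [of X]
    by (auto simp: exists_forall_subset_eq_iff [OF assms(2)])
  ultimately show ?thesis
    by blast
qed

end
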